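(* Let $I \subseteq K[\mathbf{X}]=K[X_1,\dots,X_n]$ be an ideal and let $<_1$ and $<_2$ be two term orders (each of the form $<_{\mathbf{r},m}$ described in the context). Let $G\subseteq I$ be a set which is a Gröbner basis of $I$ both with respect to $<_1$ and with respect to $<_2$. If $<_1$ and $<_2$ are equivalent with respect to $G$, then they are equivalent with respect to $I$.
   Context: $K$ is a field complete for a discrete valuation $\mathrm{val}$ (e.g. $\mathbb{Q}_p$ or $\mathbb{Q}((T))$). A term is $c\mathbf{X}^{\alpha}$ with $c\in K^\times$, $\alpha\in\mathbb{N}^n$. For $\mathbf{r}\in\mathbb{Q}^n$, the Tate algebra $K\{\mathbf{X};\mathbf{r}\}$ is the set of series $\sum_{\alpha} a_\alpha \mathbf{X}^\alpha$ with $\mathrm{val}(a_\alpha)-\mathbf{r}\cdot\alpha\to+\infty$ as $|\alpha|\to\infty$; the Gauss valuation of a term is $\mathrm{val}_{\mathbf{r}}(a\mathbf{X}^\alpha)=\mathrm{val}(a)-\mathbf{r}\cdot\alpha$ and of a series is the minimum over its terms. Given a monomial order $\le_m$, the term order $<_{\mathbf{r},m}$ is: $a\mathbf{X}^\alpha<_{\mathbf{r},m} b\mathbf{X}^\beta$ iff $\mathrm{val}_{\mathbf{r}}(a\mathbf{X}^\alpha)>\mathrm{val}_{\mathbf{r}}(b\mathbf{X}^\beta)$, or these are equal and $\mathbf{X}^\alpha<_m\mathbf{X}^\beta$. The leading term $\mathrm{LT}_<(f)$ of a nonzero series is its maximal term. For an ideal $I\subseteq K[\mathbf{X}]$, $I_{\mathbf{r}}$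 is the ideal of $K\{\mathbf{X};\mathbf{r}\}$ generated by $I$; a set $G\subseteq I$ is a Gröbner basis of $I$ with respect to $<_{\mathbf{r},m}$ if for every nonzero $f\in I_{\mathbf{r}}$ there is $g\in G$ with $\mathrm{LT}_{\mathbf{r},m}(g)$ dividing $\mathrm{LT}_{\mathbf{r},m}(f)$ (divisibility of terms = divisibility of their monomials). For a term order $<$, $\mathrm{LT}_<(I)$ denotes the ideal of $K[\mathbf{X}]$ generated by $\{\mathrm{LT}_<(f): f\in I\setminus\{0\}\}$, and for a finite set $F$ of polynomials $\mathrm{LT}_<(F)=\{\mathrm{LT}_<(f): f\in F\}$. Two term orders are equivalent with respect to a set $F$ of polynomials if $\mathrm{LT}_{<_1}(F)=\mathrm{LT}_{<_2}(F)$, and equivalent with respect to an ideal $I$ if $\mathrm{LT}_{<_1}(I)=\mathrm{LT}_{<_2}(I)$. *)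

theory Defs
  imports Complex_Main "HOL-Library.Function_Algebras"
begin

text \<open>Exponent vectors are functions 'v \<Rightarrow> nat on a finite type 'v of variables
  (so n = CARD('v)).  Series/polynomials over K are coefficient functions
  from exponent vectors to K.\<close>

type_synonym ('v, 'k) series = "('v \<Rightarrow> nat) \<Rightarrow> 'k"

definition discrete_valuation :: "('k::field \<Rightarrow> int) \<Rightarrow> bool" where
  "discrete_valuation val \<longleftrightarrow>
     (\<forall>x y. x \<noteq> 0 \<longrightarrow> y \<noteq> 0 \<longrightarrow> val (x * y) = val x + val y) \<and>
     (\<forall>x y. x \<noteq> 0 \<longrightarrow> y \<noteq> 0 \<longrightarrow> x + y \<noteq> 0 \<longrightarrow> val (x + y) \<ge> min (val x) (val y)) \<and>
     (\<forall>k. \<exists>x. x \<noteq> 0 \<and> val x = k)"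

text \<open>Completeness with respect to the valuation (val(0) = +infinity).\<close>
definition complete_valuation :: "('k::field \<Rightarrow> int) \<Rightarrow> bool" where
  "complete_valuation val \<longleftrightarrow>
     (\<forall>x :: nat \<Rightarrow> 'k.
        (\<forall>N. \<exists>M. \<forall>i j. M \<le> i \<longrightarrow> M \<le> j \<longrightarrow> x i = x j \<or> N \<le> val (x i - x j))
        \<longrightarrow> (\<exists>L. \<forall>N. \<exists>M. \<forall>i. M \<le> i \<longrightarrow> x i = L \<or> N \<le> val (x i - L)))"

definition complete_dvf :: "('k::field \<Rightarrow> int) \<Rightarrow> bool" where
  "complete_dvf val \<longleftrightarrow> discrete_valuation val \<and> complete_valuation val"

definition monomial_order :: "(('v \<Rightarrow> nat) \<Rightarrow> ('v \<Rightarrow> nat) \<Rightarrow> bool) \<Rightarrow> bool" where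
  "monomial_order m \<longleftrightarrow>
     (\<forall>a. m a a) \<and> (\<forall>a b. m a b \<longrightarrow> m b a \<longrightarrow> a = b) \<and>
     (\<forall>a b c. m a b \<longrightarrow> m b c \<longrightarrow> m a c) \<and> (\<forall>a b. m a b \<or> m b a) \<and>
     wf {(a, b). m a b \<and> a \<noteq> b} \<and>
     (\<forall>a. m 0 a) \<and> (\<forall>a b c. m a b \<longrightarrow> m (a + c) (b + c))"

definition valr :: "('k::field \<Rightarrow> int) \<Rightarrow> ('v::finite \<Rightarrow> rat) \<Rightarrow> 'k \<Rightarrow> ('v \<Rightarrow> nat) \<Rightarrow> rat" where
  "valr val r c a = of_int (val c) - (\<Sum>v\<in>UNIV. r v * of_nat (a v))"

definition term_less ::
  "('k::field \<Rightarrow> int) \<Rightarrow> ('v::finite \<Rightarrow> rat) \<Rightarrow> (('v \<Rightarrow> nat) \<Rightarrow> ('v \<Rightarrow> nat) \<Rightarrow> bool)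
     \<Rightarrow> 'k \<times> ('v \<Rightarrow> nat) \<Rightarrow> 'k \<times> ('v \<Rightarrow> nat) \<Rightarrow> bool" where
  "term_less val r m t1 t2 \<longleftrightarrow>
     valr val r (fst t1) (snd t1) > valr val r (fst t2) (snd t2) \<or>
     (valr val r (fst t1) (snd t1) = valr val r (fst t2) (snd t2) \<and>
      m (snd t1) (snd t2) \<and> snd t1 \<noteq> snd t2)"

definition lt_exp ::
  "('k::field \<Rightarrow> int) \<Rightarrow> ('v::finite \<Rightarrow> rat) \<Rightarrow> (('v \<Rightarrow> nat) \<Rightarrow> ('v \<Rightarrow> nat) \<Rightarrow> bool)
     \<Rightarrow> ('v, 'k) series \<Rightarrow> ('v \<Rightarrow> nat)" where
  "lt_exp val r m f = (THE a. f a \<noteq> 0 \<and>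
      (\<forall>b. f b \<noteq> 0 \<longrightarrow> b \<noteq> a \<longrightarrow> term_less val r m (f b, b) (f a, a)))"

definition LT ::
  "('k::field \<Rightarrow> int) \<Rightarrow> ('v::finite \<Rightarrow> rat) \<Rightarrow> (('v \<Rightarrow> nat) \<Rightarrow> ('v \<Rightarrow> nat) \<Rightarrow> bool)
     \<Rightarrow> ('v, 'k) series \<Rightarrow> 'k \<times> ('v \<Rightarrow> nat)" where
  "LT val r m f = (f (lt_exp val r m f), lt_exp val r m f)"

definition polys :: "('v, 'k::zero) series set" where
  "polys = {f. finite {a. f a \<noteq> 0}}"

definition smult_series :: "('v::finite, 'k::field) series \<Rightarrow> ('v, 'k) series \<Rightarrow> ('v, 'k) series" where
  "smult_series f g = (\<lambda>c. \<Sum>a\<in>{a. a \<le> c}. f a * g (c - a))"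

text \<open>Tate algebra K{X; r}: val_r of the terms tends to +infinity.\<close>
definition tate :: "('k::field \<Rightarrow> int) \<Rightarrow> ('v::finite \<Rightarrow> rat) \<Rightarrow> ('v, 'k) series set" where
  "tate val r = {f. \<forall>N::rat. finite {a. f a \<noteq> 0 \<and> valr val r (f a) a \<le> N}}"

definition tate_ideal :: "('k::field \<Rightarrow> int) \<Rightarrow> ('v::finite \<Rightarrow> rat) \<Rightarrow> ('v, 'k) series set \<Rightarrow> ('v, 'k) series set" where
  "tate_ideal val r I = {f. \<exists>(k::nat) h g. (\<forall>i<k. h i \<in> tate val r \<and> g i \<in> I) \<and>
       f = (\<Sum>i<k. smult_series (h i) (g i))}"

definition poly_ideal :: "('v::finite, 'k::field) series set \<Rightarrow> bool" where
  "poly_ideal J \<longleftrightarrow> J \<subseteq> polys \<and> 0 \<in> J \<and> (\<forall>f\<in>J. \<forall>g\<in>J. f + g \<in> J) \<and>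
     (\<forall>h\<in>polys. \<forall>f\<in>J. smult_series h f \<in> J)"

definition poly_ideal_gen :: "('v::finite, 'k::field) series set \<Rightarrow> ('v, 'k) series set" where
  "poly_ideal_gen S = \<Inter> {J. poly_ideal J \<and> S \<subseteq> J}"

definition monom :: "'k::zero \<Rightarrow> ('v \<Rightarrow> nat) \<Rightarrow> ('v, 'k) series" where
  "monom c a = (\<lambda>b. if b = a then c else 0)"

definition LT_ideal ::
  "('k::field \<Rightarrow> int) \<Rightarrow> ('v::finite \<Rightarrow> rat) \<Rightarrow> (('v \<Rightarrow> nat) \<Rightarrow> ('v \<Rightarrow> nat) \<Rightarrow> bool)
     \<Rightarrow> ('v, 'k) series set \<Rightarrow> ('v, 'k) series set" where
  "LT_ideal val r m I = poly_ideal_gen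
     ((\<lambda>f. monom (fst (LT val r m f)) (snd (LT val r m f))) ` (I - {0}))"

definition LT_set ::
  "('k::field \<Rightarrow> int) \<Rightarrow> ('v::finite \<Rightarrow> rat) \<Rightarrow> (('v \<Rightarrow> nat) \<Rightarrow> ('v \<Rightarrow> nat) \<Rightarrow> bool)
     \<Rightarrow> ('v, 'k) series set \<Rightarrow> ('k \<times> ('v \<Rightarrow> nat)) set" where
  "LT_set val r m F = LT val r m ` (F - {0})"

text \<open>G \<subseteq> I is a Groebner basis of I w.r.t. <_{r,m}; term divisibility = divisibility
  of monomials = componentwise \<le> of exponents.\<close>
definition groebner_basis ::
  "('k::field \<Rightarrow> int) \<Rightarrow> ('v::finite \<Rightarrow> rat) \<Rightarrow> (('v \<Rightarrow> nat) \<Rightarrow> ('v \<Rightarrow> nat) \<Rightarrow> bool)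
     \<Rightarrow> ('v, 'k) series set \<Rightarrow> ('v, 'k) series set \<Rightarrow> bool" where
  "groebner_basis val r m I G \<longleftrightarrow> G \<subseteq> I \<and>
     (\<forall>f\<in>tate_ideal val r I. f \<noteq> 0 \<longrightarrow>
        (\<exists>g\<in>G. g \<noteq> 0 \<and> snd (LT val r m g) \<le> snd (LT val r m f)))"

end

theory Submission
  imports Defs "HOL-Library.FuncSet"
begin

text \<open>If \<open>f \<in> I\<close> is nonzero, the Groebner basis property for \<open><\<^sub>1\<close> gives \<open>g \<in> G\<close> with
  \<open>LT\<^sub>1(g)\<close> dividing \<open>LT\<^sub>1(f)\<close>.  By equivalence on \<open>G\<close>, \<open>LT\<^sub>1(g) = LT\<^sub>2(g')\<close> for some \<open>g' \<in> G \<subseteq> I\<close>,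
  so \<open>LT\<^sub>1(f)\<close> is a monomial multiple of a generator of \<open>LT\<^sub>2(I)\<close>.  Hence \<open>LT\<^sub>1(I) \<subseteq> LT\<^sub>2(I)\<close>,
  and the reverse inclusion is symmetric.\<close>

lemma finite_le_fun: "finite {a :: 'v::finite \<Rightarrow> nat. a \<le> c}"
proof (rule finite_subset)
  show "{a. a \<le> c} \<subseteq> PiE UNIV (\<lambda>v. {..c v})"
    by (auto simp: le_fun_def PiE_def extensional_def)
qed (rule finite_PiE, auto)

lemma monom_in_polys: "monom c a \<in> polys"
proof -
  have "{b. monom c a b \<noteq> 0} \<subseteq> {a}" by (auto simp: monom_def)
  then show ?thesis unfolding polys_def by (auto intro: finite_subset)
qed

lemma smult_series_monom_monom:
  "smult_series (monom c a) (monom d b :: ('v::finite, 'k::field) series) = monom (c * d) (a + b)"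
proof
  fix x :: "'v \<Rightarrow> nat"
  have "smult_series (monom c a) (monom d b) x
      = (\<Sum>a'\<in>{a'. a' \<le> x}. if a' = a then c * monom d b (x - a') else 0)"
    unfolding smult_series_def by (rule sum.cong) (auto simp: monom_def)
  also have "\<dots> = (if a \<le> x then c * monom d b (x - a) else 0)"
    using finite_le_fun[of x] by (simp add: sum.delta)
  also have "\<dots> = monom (c * d) (a + b) x"
  proof (cases "a \<le> x")
    case True
    then have "x - a = b \<longleftrightarrow> x = a + b"
      by (auto simp: fun_eq_iff le_fun_def) (metis le_add_diff_inverse)
    with True show ?thesis by (simp add: monom_def)
  next
    case False
    then have "x \<noteq> a + b" by (auto simp: le_fun_def)
    with False show ?thesis by (simp add: monom_def)
  qed
  finally show "smult_series (monom c a) (monom d b) x = monom (c * d) (a + b) x" .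
qed

lemma monom_eq_smult_series_monom:
  fixes a b :: "'v::finite \<Rightarrow> nat" and c d :: "'k::field"
  assumes "a \<le> b" and "c \<noteq> 0"
  shows "monom d b = smult_series (monom (d / c) (b - a)) (monom c a)"
proof -
  have "b - a + a = b" using \<open>a \<le> b\<close> by (auto simp: fun_eq_iff le_fun_def)
  with \<open>c \<noteq> 0\<close> show ?thesis by (simp add: smult_series_monom_monom)
qed

lemma smult_series_monom_one_left:
  "smult_series (monom 1 0) (f :: ('v::finite, 'k::field) series) = f"
proof
  fix x :: "'v \<Rightarrow> nat"
  have "smult_series (monom 1 0) f x = (\<Sum>a\<in>{a. a \<le> x}. if a = 0 then f (x - a) else 0)"
    unfolding smult_series_def by (rule sum.cong) (auto simp: monom_def)
  also have "\<dots> = f x"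
    using finite_le_fun[of x] by (simp add: sum.delta le_fun_def)
  finally show "smult_series (monom 1 0) f x = f x" .
qed

lemma monom_one_zero_in_tate: "monom 1 0 \<in> tate val r"
proof -
  have "{a. monom 1 0 a \<noteq> 0 \<and> valr val r (monom 1 0 a) a \<le> N} \<subseteq> {0}" for N
    by (auto simp: monom_def)
  then show ?thesis unfolding tate_def by (auto intro: finite_subset)
qed

lemma subset_tate_ideal: "I \<subseteq> tate_ideal val r (I :: ('v::finite, 'k::field) series set)"
proof
  fix f assume "f \<in> I"
  then show "f \<in> tate_ideal val r I"
    unfolding tate_ideal_def
    using monom_one_zero_in_tate smult_series_monom_one_left[of f, symmetric]
    by (intro CollectI exI[of _ 1] exI[of _ "\<lambda>_. monom 1 0"] exI[of _ "\<lambda>_. f"]) auto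
qed

lemma poly_ideal_gen_mono:
  assumes "\<And>x. x \<in> S \<Longrightarrow> \<exists>h\<in>polys. \<exists>y\<in>T. x = smult_series h y"
  shows "poly_ideal_gen S \<subseteq> poly_ideal_gen T"
proof -
  have "S \<subseteq> J" if "poly_ideal J" "T \<subseteq> J" for J
    using assms that unfolding poly_ideal_def by blast
  then show ?thesis unfolding poly_ideal_gen_def by blast
qed

lemma finite_strict_total_order_has_greatest:
  assumes "finite S" "S \<noteq> {}"
    and R_irrefl: "\<And>a. a \<in> S \<Longrightarrow> \<not> R a a"
    and R_trans: "\<And>a b c. a \<in> S \<Longrightarrow> b \<in> S \<Longrightarrow> c \<in> S \<Longrightarrow> R a b \<Longrightarrow> R b c \<Longrightarrow> R a c"
    and R_total: "\<And>a b. a \<in> S \<Longrightarrow> b \<in> S \<Longrightarrow> a \<noteq> b \<Longrightarrow> R a b \<or> R b a"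
  obtains a where "a \<in> S" "\<And>b. b \<in> S \<Longrightarrow> b \<noteq> a \<Longrightarrow> R b a"
proof -
  define above where "above = {(b, a). a \<in> S \<and> b \<in> S \<and> R a b}"
  have "above \<subseteq> S \<times> S" by (auto simp: above_def)
  with \<open>finite S\<close> have "finite above" by (simp add: finite_subset)
  moreover have "trans above"
    by (rule transI) (auto simp: above_def intro: R_trans)
  then have "acyclic above"
    by (auto simp: acyclic_def above_def R_irrefl)
  ultimately have "wf above" by (rule finite_acyclic_wf)
  then obtain a where a: "a \<in> S" "\<And>b. (b, a) \<in> above \<Longrightarrow> b \<notin> S"
    using \<open>S \<noteq> {}\<close> by (metis ex_in_conv wfE_min)
  have "R b a" if "b \<in> S" "b \<noteq> a" for b
  proof -
    have "\<not> R a b" using a(2)[of b] \<open>a \<in> S\<close> \<open>b \<in> S\<close> unfolding above_def by blast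
    with R_total[OF \<open>a \<in> S\<close> \<open>b \<in> S\<close>] \<open>b \<noteq> a\<close> show ?thesis by blast
  qed
  with a(1) show thesis by (rule that)
qed

lemma term_less_irrefl: "\<not> term_less val r m t t"
  by (simp add: term_less_def)

lemma term_less_trans:
  assumes "monomial_order m" "term_less val r m t1 t2" "term_less val r m t2 t3"
  shows "term_less val r m t1 t3"
proof -
  have m_antisym: "\<And>a b. m a b \<Longrightarrow> m b a \<Longrightarrow> a = b"
    and m_trans: "\<And>a b c. m a b \<Longrightarrow> m b c \<Longrightarrow> m a c"
    using \<open>monomial_order m\<close> unfolding monomial_order_def by blast+
  then have m_strict_trans: "m a c \<and> a \<noteq> c" if "m a b" "a \<noteq> b" "m b c" "b \<noteq> c" for a b c
    using that m_trans[of a b c] m_antisym[of a b] by auto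
  define v where "v t = valr val r (fst t) (snd t)" for t
  have "v t3 < v t1 \<or> (v t1 = v t3 \<and> m (snd t1) (snd t3) \<and> snd t1 \<noteq> snd t3)"
    using assms(2,3) unfolding term_less_def v_def[symmetric]
  proof (elim disjE conjE)
    assume "m (snd t1) (snd t2)" "snd t1 \<noteq> snd t2" "m (snd t2) (snd t3)" "snd t2 \<noteq> snd t3"
      and "v t1 = v t2" "v t2 = v t3"
    then show ?thesis using m_strict_trans[of "snd t1" "snd t2" "snd t3"] by simp
  qed simp_all
  then show ?thesis unfolding term_less_def v_def .
qed

lemma term_less_total:
  assumes "monomial_order m" "snd t1 \<noteq> snd t2"
  shows "term_less val r m t1 t2 \<or> term_less val r m t2 t1"
proof -
  have "m (snd t1) (snd t2) \<or> m (snd t2) (snd t1)"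
    using \<open>monomial_order m\<close> unfolding monomial_order_def by simp
  with assms(2) show ?thesis unfolding term_less_def by auto
qed

lemma lt_exp_leading:
  assumes mo: "monomial_order m" and "f \<in> polys" "f \<noteq> 0"
  shows "f (lt_exp val r m f) \<noteq> 0 \<and>
    (\<forall>b. f b \<noteq> 0 \<longrightarrow> b \<noteq> lt_exp val r m f \<longrightarrow>
       term_less val r m (f b, b) (f (lt_exp val r m f), lt_exp val r m f))"
proof -
  let ?leading = "\<lambda>a. f a \<noteq> 0 \<and> (\<forall>b. f b \<noteq> 0 \<longrightarrow> b \<noteq> a \<longrightarrow> term_less val r m (f b, b) (f a, a))"
  let ?S = "{a. f a \<noteq> 0}"
  obtain a where "a \<in> ?S" "\<And>b. b \<in> ?S \<Longrightarrow> b \<noteq> a \<Longrightarrow> term_less val r m (f b, b) (f a, a)"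
  proof (rule finite_strict_total_order_has_greatest[of ?S "\<lambda>a b. term_less val r m (f a, a) (f b, b)"])
    show "finite ?S" using \<open>f \<in> polys\<close> by (simp add: polys_def)
    show "?S \<noteq> {}" using \<open>f \<noteq> 0\<close> by auto
    show "\<not> term_less val r m (f a, a) (f a, a)" for a
      by (rule term_less_irrefl)
    show "term_less val r m (f a, a) (f c, c)"
      if "term_less val r m (f a, a) (f b, b)" "term_less val r m (f b, b) (f c, c)" for a b c
      using mo that by (rule term_less_trans)
    show "term_less val r m (f a, a) (f b, b) \<or> term_less val r m (f b, b) (f a, a)"
      if "a \<noteq> b" for a b
      using term_less_total[OF mo, of "(f a, a)" "(f b, b)"] that by simp
  qed (rule that)
  then have "?leading a" by simp
  moreover have "a' = a" if "?leading a'" for a'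
  proof (rule ccontr)
    assume "a' \<noteq> a"
    then have "term_less val r m (f a', a') (f a, a)" "term_less val r m (f a, a) (f a', a')"
      using that \<open>?leading a\<close> by auto
    then show False
      using term_less_trans[OF mo] term_less_irrefl by blast
  qed
  ultimately have "?leading (THE a. ?leading a)" by (rule theI)
  then show ?thesis unfolding lt_exp_def .
qed

lemma LT_coeff_nonzero:
  assumes "monomial_order m" "f \<in> polys" "f \<noteq> 0"
  shows "fst (LT val r m f) \<noteq> 0"
  using lt_exp_leading[OF assms] by (simp add: LT_def)

lemma LT_ideal_subset_if_groebner_basis:
  assumes "I \<subseteq> polys" "monomial_order m1"
    and gb: "groebner_basis val r1 m1 I G"
    and LT_eq: "LT_set val r1 m1 G = LT_set val r2 m2 G"
  shows "LT_ideal val r1 m1 I \<subseteq> LT_ideal val r2 m2 I"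
  unfolding LT_ideal_def
proof (rule poly_ideal_gen_mono)
  fix x assume "x \<in> (\<lambda>f. monom (fst (LT val r1 m1 f)) (snd (LT val r1 m1 f))) ` (I - {0})"
  then obtain f where f: "f \<in> I" "f \<noteq> 0" and x: "x = monom (fst (LT val r1 m1 f)) (snd (LT val r1 m1 f))"
    by blast
  have "G \<subseteq> I" using gb by (simp add: groebner_basis_def)
  obtain g where g: "g \<in> G" "g \<noteq> 0" "snd (LT val r1 m1 g) \<le> snd (LT val r1 m1 f)"
    using gb f subset_tate_ideal unfolding groebner_basis_def by blast
  have "LT val r1 m1 g \<in> LT_set val r1 m1 G" using g by (simp add: LT_set_def)
  with LT_eq obtain g' where g': "g' \<in> G - {0}" "LT val r1 m1 g = LT val r2 m2 g'"
    unfolding LT_set_def by auto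
  have "g \<in> polys" using g(1) \<open>G \<subseteq> I\<close> \<open>I \<subseteq> polys\<close> by blast
  with \<open>monomial_order m1\<close> have "fst (LT val r1 m1 g) \<noteq> 0"
    using g(2) by (rule LT_coeff_nonzero)
  with g(3) have "x = smult_series (monom (fst (LT val r1 m1 f) / fst (LT val r1 m1 g))
                            (snd (LT val r1 m1 f) - snd (LT val r1 m1 g)))
                     (monom (fst (LT val r2 m2 g')) (snd (LT val r2 m2 g')))"
    unfolding x g'(2)[symmetric] by (rule monom_eq_smult_series_monom)
  moreover have "monom (fst (LT val r2 m2 g')) (snd (LT val r2 m2 g'))
      \<in> (\<lambda>f. monom (fst (LT val r2 m2 f)) (snd (LT val r2 m2 f))) ` (I - {0})"
    using g'(1) \<open>G \<subseteq> I\<close> by blast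
  ultimately show "\<exists>h\<in>polys. \<exists>y\<in>(\<lambda>f. monom (fst (LT val r2 m2 f)) (snd (LT val r2 m2 f))) ` (I - {0}).
      x = smult_series h y"
    using monom_in_polys by blast
qed

theorem mainTheorem1:
  fixes val :: "'k::field \<Rightarrow> int"
    and I G :: "('v::finite, 'k) series set"
    and r1 r2 :: "'v \<Rightarrow> rat"
    and m1 m2 :: "('v \<Rightarrow> nat) \<Rightarrow> ('v \<Rightarrow> nat) \<Rightarrow> bool"
  assumes "complete_dvf val"
    and "poly_ideal I"
    and "monomial_order m1" and "monomial_order m2"
    and "G \<subseteq> I"
    and "groebner_basis val r1 m1 I G" and "groebner_basis val r2 m2 I G"
    and "LT_set val r1 m1 G = LT_set val r2 m2 G"
  shows "LT_ideal val r1 m1 I = LT_ideal val r2 m2 I"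
proof -
  have "I \<subseteq> polys" using \<open>poly_ideal I\<close> by (simp add: poly_ideal_def)
  show ?thesis
  proof (rule subset_antisym)
    show "LT_ideal val r1 m1 I \<subseteq> LT_ideal val r2 m2 I"
      using \<open>I \<subseteq> polys\<close> assms(3,6,8) by (rule LT_ideal_subset_if_groebner_basis)
    show "LT_ideal val r2 m2 I \<subseteq> LT_ideal val r1 m1 I"
      using \<open>I \<subseteq> polys\<close> assms(4,7) assms(8)[symmetric] by (rule LT_ideal_subset_if_groebner_basis)
  qed
qed

end
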